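(* Let $M$ be a locally finite uniformly discrete metric space which admits a quasi-isometric embedding into an infinite-dimensional Banach space $X$. Then $M$ admits a bilipschitz embedding into $X$.
   Context: A metric space is locally finite if every ball of finite radius has finite cardinality; it is uniformly discrete if $\inf\{d(u,v):u\ne v\}>0$. A map $f:(A,d_A)\to(B,d_B)$ is a quasi-isometric embedding if there are $a_1,a_2>0$, $b\ge 0$ with $a_1d_A(u,v)-b\le d_B(f(u),f(v))\le a_2d_A(u,v)+b$ for all $u,v\in A$. A bilipschitz embedding is a map with $c\,d_A(u,v)\le d_B(f(u),f(v))\le C\,d_A(u,v)$ for constants $0<c\le C<\infty$. *)

theory Defs
  imports "HOL-Analysis.Analysis"
begin

definition locally_finite_metric :: "'a set \<Rightarrow> ('a \<Rightarrow> 'a \<Rightarrow> real) \<Rightarrow> bool" where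
  "locally_finite_metric M d \<longleftrightarrow> (\<forall>x\<in>M. \<forall>r::real. finite {y\<in>M. d x y \<le> r})"

definition uniformly_discrete :: "'a set \<Rightarrow> ('a \<Rightarrow> 'a \<Rightarrow> real) \<Rightarrow> bool" where
  "uniformly_discrete M d \<longleftrightarrow> (\<exists>e>0. \<forall>u\<in>M. \<forall>v\<in>M. u \<noteq> v \<longrightarrow> e \<le> d u v)"

definition quasi_isometric_embedding ::
  "'a set \<Rightarrow> ('a \<Rightarrow> 'a \<Rightarrow> real) \<Rightarrow> ('a \<Rightarrow> 'b::metric_space) \<Rightarrow> bool" where
  "quasi_isometric_embedding M d f \<longleftrightarrow>
     (\<exists>a1>0. \<exists>a2>0. \<exists>b\<ge>0. \<forall>u\<in>M. \<forall>v\<in>M.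
        a1 * d u v - b \<le> dist (f u) (f v) \<and> dist (f u) (f v) \<le> a2 * d u v + b)"

definition bilipschitz_embedding ::
  "'a set \<Rightarrow> ('a \<Rightarrow> 'a \<Rightarrow> real) \<Rightarrow> ('a \<Rightarrow> 'b::metric_space) \<Rightarrow> bool" where
  "bilipschitz_embedding M d f \<longleftrightarrow>
     (\<exists>c C. 0 < c \<and> c \<le> C \<and> (\<forall>u\<in>M. \<forall>v\<in>M.
        c * d u v \<le> dist (f u) (f v) \<and> dist (f u) (f v) \<le> C * d u v))"

definition infinite_dimensional :: "'b::real_vector itself \<Rightarrow> bool" where
  "infinite_dimensional TYPE('b) \<longleftrightarrow> \<not> (\<exists>S::'b set. finite S \<and> span S = UNIV)"

end

theory Submission imports Defs begin

text \<open>Since M is locally finite it is countable, so in an enumeration of M we may move the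
  images of a quasi-isometric embedding f, one point after the other, by at most 1 so that the new
  image point keeps distance at least 1/2 from all earlier ones; this is possible because, by the
  Riesz lemma, the unit ball of an infinite-dimensional space is not covered by finitely many balls
  of radius 1/2. The perturbed map is still a quasi-isometric embedding and is in addition
  separated, which on a uniformly discrete space makes it bilipschitz: the additive error of the
  lower bound is absorbed at large distances, and separation handles the small ones.\<close>

lemma closed_span_insert:
  fixes S :: "'b::real_normed_vector set"
  assumes closed: "closed (span S)"
  shows "closed (span (insert x S))"
proof (cases "x \<in> span S")
  case True
  then show ?thesis using closed by (simp add: span_redundant)
next
  case False
  have "span S \<noteq> {}" using span_zero by blast
  then have dpos: "infdist x (span S) > 0"
    using infdist_pos_not_in_closed[OF closed _ False] by simp
  have coeff_bound: "\<bar>t\<bar> * infdist x (span S) \<le> norm y" if "y - t *\<^sub>R x \<in> span S" for y t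
  proof (cases "t = 0")
    case False
    have "x - (1/t) *\<^sub>R y = (- (1/t)) *\<^sub>R (y - t *\<^sub>R x)"
      using False by (simp add: algebra_simps)
    then have "x - (1/t) *\<^sub>R y \<in> span S" using span_mul[OF that] by metis
    then have "infdist x (span S) \<le> dist x (x - (1/t) *\<^sub>R y)" by (rule infdist_le)
    also have "\<dots> = norm y / \<bar>t\<bar>" by (simp add: dist_norm)
    finally show ?thesis using False by (simp add: field_simps)
  qed simp
  show ?thesis unfolding span_insert closed_sequential_limits
  proof (intro allI impI, elim conjE)
    fix s l assume "\<forall>n. s n \<in> {y. \<exists>t. y - t *\<^sub>R x \<in> span S}" and lim: "s \<longlonglongrightarrow> l"
    then obtain T where T: "\<And>n. s n - T n *\<^sub>R x \<in> span S" by simp metis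
    obtain K where K: "\<And>n. norm (s n) \<le> K"
      using convergent_imp_bounded[OF lim] unfolding bounded_iff by auto
    have "\<bar>T n\<bar> \<le> K / infdist x (span S)" for n
      using coeff_bound[OF T[of n]] K[of n] dpos by (simp add: field_simps)
    then have "bounded (range T)" unfolding bounded_iff by auto
    then obtain t r where r: "strict_mono r" and "(T \<circ> r) \<longlonglongrightarrow> t"
      using bounded_imp_convergent_subsequence by blast
    then have "(\<lambda>n. s (r n) - T (r n) *\<^sub>R x) \<longlonglongrightarrow> l - t *\<^sub>R x"
      using LIMSEQ_subseq_LIMSEQ[OF lim r] by (intro tendsto_intros) (auto simp: o_def)
    then have "l - t *\<^sub>R x \<in> span S"
      using T closed unfolding closed_sequential_limits by meson
    then show "l \<in> {y. \<exists>t. y - t *\<^sub>R x \<in> span S}" by auto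
  qed
qed

lemma closed_span_finite:
  fixes S :: "'b::real_normed_vector set"
  assumes "finite S"
  shows "closed (span S)"
  using assms by (induction rule: finite_induct) (auto intro: closed_span_insert)

lemma riesz_lemma:
  fixes V :: "'b::real_normed_vector set"
  assumes closed: "closed V" and subspace: "subspace V" and proper: "V \<noteq> UNIV"
  obtains p where "norm p = 1" and "\<And>v. v \<in> V \<Longrightarrow> 1/2 \<le> dist p v"
proof -
  obtain x where x: "x \<notin> V" using proper by auto
  have ne: "V \<noteq> {}" using subspace_0[OF subspace] by auto
  define \<delta> where "\<delta> = infdist x V"
  have \<delta>_pos: "\<delta> > 0" unfolding \<delta>_def using infdist_pos_not_in_closed[OF closed ne x] .
  have "bdd_below (dist x ` V)" by (rule bdd_belowI[of _ 0]) auto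
  moreover have "infdist x V < 2 * \<delta>" using \<delta>_pos unfolding \<delta>_def by simp
  ultimately obtain v0 where v0: "v0 \<in> V" "dist x v0 < 2 * \<delta>"
    using ne unfolding infdist_def by (auto simp: cINF_less_iff)
  define N where "N = norm (x - v0)"
  have N_pos: "N > 0" unfolding N_def using v0 x by auto
  have N_less: "N < 2 * \<delta>" using v0 by (simp add: N_def dist_norm)
  define p where "p = (1/N) *\<^sub>R (x - v0)"
  have "1/2 \<le> dist p v" if v: "v \<in> V" for v
  proof -
    have "v0 + N *\<^sub>R v \<in> V" using subspace v0(1) v by (simp add: subspace_add subspace_scale)
    then have "\<delta> \<le> dist x (v0 + N *\<^sub>R v)" unfolding \<delta>_def by (rule infdist_le)
    also have "\<dots> = norm (N *\<^sub>R (p - v))"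
      using N_pos by (simp add: p_def dist_norm algebra_simps)
    also have "\<dots> = N * dist p v" using N_pos by (simp add: dist_norm)
    finally have "N / 2 \<le> N * dist p v" using N_less by linarith
    then show ?thesis using N_pos by (simp add: field_simps)
  qed
  moreover have "norm p = 1" using N_pos by (simp add: p_def N_def)
  ultimately show thesis using that by blast
qed

lemma exists_unit_vector_far_from_finite:
  fixes Q :: "'b::real_normed_vector set"
  assumes "finite Q" and "infinite_dimensional TYPE('b)"
  obtains p where "norm p = 1" and "\<And>q. q \<in> Q \<Longrightarrow> 1/2 \<le> dist p q"
proof -
  have "span Q \<noteq> UNIV" using assms unfolding infinite_dimensional_def by blast
  then obtain p where "norm p = 1" and "\<And>v. v \<in> span Q \<Longrightarrow> 1/2 \<le> dist p v"
    using riesz_lemma[OF closed_span_finite[OF assms(1)] subspace_span] by blast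
  then show thesis using that span_base by blast
qed

lemma greedy_sequence:
  assumes "\<And>xs. \<exists>x. P xs x"
  obtains y where "\<And>n. P (map y [0..<n]) (y n)"
proof -
  define L where "L = rec_nat [] (\<lambda>_ xs. xs @ [SOME x. P xs x])"
  define y where "y n = (SOME x. P (L n) x)" for n
  have L_eq: "L n = map y [0..<n]" for n by (induction n) (simp_all add: L_def y_def)
  have "P (L n) (y n)" for n unfolding y_def by (rule someI_ex[OF assms])
  then show thesis by (intro that) (simp only: L_eq)
qed

lemma exists_separating_perturbation_seq:
  fixes a :: "nat \<Rightarrow> 'b::real_normed_vector"
  assumes "infinite_dimensional TYPE('b)"
  obtains y where "\<And>n. norm (y n) \<le> 1"
    and "\<And>m n. m < n \<Longrightarrow> 1/2 \<le> dist (a n + y n) (a m + y m)"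
proof -
  define P where "P xs p \<longleftrightarrow> norm p \<le> 1 \<and>
      (\<forall>m<length xs. 1/2 \<le> dist (a (length xs) + p) (a m + xs ! m))" for xs p
  have P_solvable: "\<exists>p. P xs p" for xs
  proof -
    define Q where "Q = (\<lambda>m. a m + xs ! m - a (length xs)) ` {..<length xs}"
    have "finite Q" by (simp add: Q_def)
    then obtain p where "norm p = 1" and far: "\<And>q. q \<in> Q \<Longrightarrow> 1/2 \<le> dist p q"
      using exists_unit_vector_far_from_finite[OF _ assms] by blast
    have "1/2 \<le> dist (a (length xs) + p) (a m + xs ! m)" if "m < length xs" for m
    proof -
      have "1/2 \<le> dist p (a m + xs ! m - a (length xs))"
        using that by (intro far) (simp add: Q_def)
      also have "\<dots> = dist (a (length xs) + p) (a m + xs ! m)"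
        by (simp add: dist_norm algebra_simps)
      finally show ?thesis .
    qed
    then have "P xs p" using \<open>norm p = 1\<close> unfolding P_def by simp
    then show ?thesis ..
  qed
  obtain y where y: "\<And>n. P (map y [0..<n]) (y n)"
    using greedy_sequence[of P, OF P_solvable] by metis
  show thesis
  proof (rule that)
    show "norm (y n) \<le> 1" for n using y[of n] unfolding P_def by simp
    show "1/2 \<le> dist (a n + y n) (a m + y m)" if "m < n" for m n
      using y[of n] that unfolding P_def by simp
  qed
qed

lemma exists_separating_perturbation:
  fixes f :: "'a \<Rightarrow> 'b::real_normed_vector"
  assumes "countable M" and "infinite_dimensional TYPE('b)"
  obtains g where "\<And>x. x \<in> M \<Longrightarrow> dist (g x) (f x) \<le> 1"
    and "\<And>x z. x \<in> M \<Longrightarrow> z \<in> M \<Longrightarrow> x \<noteq> z \<Longrightarrow> 1/2 \<le> dist (g x) (g z)"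
proof -
  obtain y where y_norm: "\<And>n. norm (y n) \<le> 1" and y_sep:
      "\<And>m n. m < n \<Longrightarrow> 1/2 \<le> dist (f (from_nat_into M n) + y n) (f (from_nat_into M m) + y m)"
    using exists_separating_perturbation_seq[OF assms(2), where a="\<lambda>n. f (from_nat_into M n)"]
    by metis
  define g where "g x = f x + y (to_nat_on M x)" for x
  have g_eq: "g x = f (from_nat_into M (to_nat_on M x)) + y (to_nat_on M x)" if "x \<in> M" for x
    using assms(1) that by (simp add: g_def)
  have "1/2 \<le> dist (g x) (g z)" if "x \<in> M" "z \<in> M" "x \<noteq> z" for x z
  proof -
    have "to_nat_on M x \<noteq> to_nat_on M z"
      using that inj_on_to_nat_on[OF assms(1)] by (auto dest: inj_onD)
    then show ?thesis
      using y_sep[of "to_nat_on M x" "to_nat_on M z"] y_sep[of "to_nat_on M z" "to_nat_on M x"]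
      unfolding g_eq[OF that(1)] g_eq[OF that(2)] by (metis dist_commute linorder_neqE_nat)
  qed
  moreover have "dist (g x) (f x) \<le> 1" for x using y_norm by (simp add: g_def dist_norm)
  ultimately show thesis using that by blast
qed

lemma locally_finite_metric_imp_countable:
  assumes "locally_finite_metric M d"
  shows "countable M"
proof (cases "M = {}")
  case False
  then obtain x0 where x0: "x0 \<in> M" by auto
  have M_eq: "M = (\<Union>n::nat. {y\<in>M. d x0 y \<le> real n})"
  proof (intro equalityI subsetI)
    fix y assume "y \<in> M"
    moreover obtain n :: nat where "d x0 y \<le> real n" using real_arch_simple by blast
    ultimately show "y \<in> (\<Union>n::nat. {y\<in>M. d x0 y \<le> real n})" by auto
  qed auto
  have "countable {y\<in>M. d x0 y \<le> real n}" for n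
    using assms x0 unfolding locally_finite_metric_def by (simp add: countable_finite)
  then show ?thesis by (subst M_eq) (intro countable_UN[OF countableI_type])
qed simp

lemma quasi_isometric_embedding_bounded_perturbation:
  assumes "quasi_isometric_embedding M d f" and "0 \<le> r"
    and close: "\<And>x. x \<in> M \<Longrightarrow> dist (g x) (f x) \<le> r"
  shows "quasi_isometric_embedding M d g"
proof -
  obtain a1 a2 b where "a1 > 0" "a2 > 0" "b \<ge> 0" and f_qi: "\<And>u v. u \<in> M \<Longrightarrow> v \<in> M \<Longrightarrow>
      a1 * d u v - b \<le> dist (f u) (f v) \<and> dist (f u) (f v) \<le> a2 * d u v + b"
    using assms(1) unfolding quasi_isometric_embedding_def by blast
  have "a1 * d u v - (b + 2 * r) \<le> dist (g u) (g v) \<and> dist (g u) (g v) \<le> a2 * d u v + (b + 2 * r)"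
    if "u \<in> M" "v \<in> M" for u v
  proof -
    have "dist (g u) (g v) \<le> dist (g u) (f u) + dist (f u) (f v) + dist (f v) (g v)"
      and "dist (f u) (f v) \<le> dist (f u) (g u) + dist (g u) (g v) + dist (g v) (f v)"
      using dist_triangle dist_triangle2 by (meson add_mono order_trans order.refl)+
    then show ?thesis
      using f_qi[OF that] close[OF that(1)] close[OF that(2)] by (simp add: dist_commute)
  qed
  then show ?thesis unfolding quasi_isometric_embedding_def
    using \<open>a1 > 0\<close> \<open>a2 > 0\<close> \<open>b \<ge> 0\<close> \<open>0 \<le> r\<close>
    by (intro exI[of _ a1] exI[of _ a2] exI[of _ "b + 2 * r"] conjI) auto
qed

lemma separated_quasi_isometric_imp_bilipschitz:
  assumes "Metric_space M d" and "uniformly_discrete M d"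
    and "quasi_isometric_embedding M d g" and "\<delta> > 0"
    and sep: "\<And>x z. x \<in> M \<Longrightarrow> z \<in> M \<Longrightarrow> x \<noteq> z \<Longrightarrow> \<delta> \<le> dist (g x) (g z)"
  shows "bilipschitz_embedding M d g"
proof -
  interpret Metric_space M d by fact
  obtain a1 a2 b where a1: "a1 > 0" and a2: "a2 > 0" and b: "b \<ge> 0" and g_qi: "\<And>u v. u \<in> M \<Longrightarrow>
      v \<in> M \<Longrightarrow> a1 * d u v - b \<le> dist (g u) (g v) \<and> dist (g u) (g v) \<le> a2 * d u v + b"
    using assms(3) unfolding quasi_isometric_embedding_def by blast
  obtain e where e: "e > 0" and discrete: "\<And>u v. u \<in> M \<Longrightarrow> v \<in> M \<Longrightarrow> u \<noteq> v \<Longrightarrow> e \<le> d u v"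
    using assms(2) unfolding uniformly_discrete_def by blast
  \<comment> \<open>Beyond distance R the additive constant is at most half of the linear lower bound.\<close>
  define R where "R = 2 * (b + 1) / a1"
  define c where "c = min (a1 / 2) (\<delta> / R)"
  define C where "C = max c (a2 + b / e)"
  have R_pos: "R > 0" and c_pos: "c > 0" using a1 b \<open>\<delta> > 0\<close> by (simp_all add: R_def c_def)
  have c_le: "c \<le> a1 / 2" "c \<le> \<delta> / R" unfolding c_def by (rule min.cobounded1, rule min.cobounded2)
  have distinct_bounds: "c * d x z \<le> dist (g x) (g z) \<and> dist (g x) (g z) \<le> C * d x z"
    if x: "x \<in> M" and z: "z \<in> M" and "x \<noteq> z" for x z
  proof
    have "e \<le> d x z" using discrete[OF x z \<open>x \<noteq> z\<close>] .
    have "c * d x z \<le> a1 * d x z - b" if "R \<le> d x z"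
    proof -
      have "2 * (b + 1) \<le> a1 * d x z"
        using that a1 mult_left_mono[OF that, of a1] by (simp add: R_def)
      moreover have "c * d x z \<le> a1 * d x z / 2"
        using mult_right_mono[OF c_le(1), of "d x z"] \<open>e \<le> d x z\<close> e by simp
      ultimately show ?thesis by (simp add: field_simps)
    qed
    moreover have "c * d x z \<le> \<delta>" if "d x z < R"
    proof -
      have "c * d x z \<le> \<delta> / R * R"
        using c_le c_pos that \<open>e \<le> d x z\<close> e by (intro mult_mono) auto
      then show ?thesis using R_pos by simp
    qed
    ultimately show "c * d x z \<le> dist (g x) (g z)"
      using g_qi[OF x z] sep[OF x z \<open>x \<noteq> z\<close>] by (meson linorder_not_le order_trans)
    have "b \<le> b / e * d x z"
      using \<open>e \<le> d x z\<close> e b by (simp add: field_simps mult_left_mono)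
    then have "dist (g x) (g z) \<le> (a2 + b / e) * d x z"
      using g_qi[OF x z] by (simp add: algebra_simps)
    also have "\<dots> \<le> C * d x z"
      unfolding C_def using \<open>e \<le> d x z\<close> e by (intro mult_right_mono) auto
    finally show "dist (g x) (g z) \<le> C * d x z" .
  qed
  have "c * d x z \<le> dist (g x) (g z) \<and> dist (g x) (g z) \<le> C * d x z"
    if "x \<in> M" and "z \<in> M" for x z
    using that distinct_bounds[OF that] by (cases "x = z") simp_all
  moreover have "c \<le> C" unfolding C_def by simp
  ultimately show ?thesis
    unfolding bilipschitz_embedding_def using c_pos by (intro exI[of _ c] exI[of _ C] conjI) auto
qed

theorem lemmaL:
  fixes M :: "'a set" and d :: "'a \<Rightarrow> 'a \<Rightarrow> real"
  assumes "Metric_space M d"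
    and "locally_finite_metric M d"
    and "uniformly_discrete M d"
    and "infinite_dimensional TYPE('b::banach)"
    and "\<exists>f :: 'a \<Rightarrow> 'b. quasi_isometric_embedding M d f"
  shows "\<exists>g :: 'a \<Rightarrow> 'b. bilipschitz_embedding M d g"
proof -
  obtain f :: "'a \<Rightarrow> 'b" where f: "quasi_isometric_embedding M d f" using assms(5) by blast
  obtain g where close: "\<And>x. x \<in> M \<Longrightarrow> dist (g x) (f x) \<le> 1"
    and sep: "\<And>x z. x \<in> M \<Longrightarrow> z \<in> M \<Longrightarrow> x \<noteq> z \<Longrightarrow> 1/2 \<le> dist (g x) (g z)"
    using exists_separating_perturbation[OF locally_finite_metric_imp_countable[OF assms(2)] assms(4)]
    by blast
  have "quasi_isometric_embedding M d g"
    using quasi_isometric_embedding_bounded_perturbation[OF f _ close] by simp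
  then have "bilipschitz_embedding M d g"
    by (rule separated_quasi_isometric_imp_bilipschitz[where \<delta>="1/2", OF assms(1,3) _ _ sep]) simp
  then show ?thesis by blast
qed

end
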